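(* Let $\rho=(a,2t,b)$, i.e. $\rho(x,y)=ax^2+2txy+by^2$, be a positive definite binary quadratic form with $(2t)^2-4ab=-4\Omega C<0$, such that $2\parallel t$ and $\gcd(a,2t,b)=4$. Assume that $C=2$ or $C$ is twice an odd prime, that $\Omega>0$ is even, and let $\Delta>0$ be an odd integer with $\gcd(C,\Delta)=1$ such that the congruences $$R^2+\Delta a\equiv 0,\qquad RS-\Delta t\equiv 0,\qquad S^2+\Delta b\equiv 0 \pmod C$$ are solvable in integers $R,S$. Then $\rho$ is properly represented by a positive definite properly primitive ternary quadratic form $f$ with invariants $\Omega$ and $\Delta$, and the reciprocal $F$ of $f$ is improperly primitive.
   Context: A ternary quadratic form is $f(x,y,z)=a_{11}x^2+a_{22}y^2+a_{33}z^2+2a_{23}yz+2a_{13}xz+2a_{12}xy$ with $a_{ij}\in\mathbb{Z}$, with symmetric matrix $A=(a_{ij})$. Let $\tau=\gcd(a_{11},a_{22},a_{33},a_{23},a_{13},a_{12})$ and $\sigma=\gcd(a_{11},a_{22},a_{33},2a_{23},2a_{13},2a_{12})$. $f$ is primitive if $\tau=1$, properly primitive if $\sigma=\tau=1$, improperly primitive if $\tau=1,\sigma=2$. Let $A_{ij}$ be the $(i,j)$-cofactor of $A$, $\Omega=\gcd(A_{11},A_{22},A_{33},A_{23},A_{13},A_{12})$, and for primitive $f$ define $\Delta$ by $\det(A)=\Delta\Omega^2$; $\Omega,\Delta$ are the invariants of $f$. The reciprocal of $f$ is $F=\frac1\Omega\sum_{i,j}A_{ij}X_iX_j$. A binary form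 with matrix $B$ is represented by $f$ if there is an integer $3\times 2$ matrix $M$ with $M^{t}AM=B$, and properly represented if moreover the $2\times 2$ minors of $M$ are coprime. The binary form $(a,2t,b)$ has matrix $\begin{pmatrix}a&t\\t&b\end{pmatrix}$. *)

theory Defs
  imports Complex_Main "HOL-Computational_Algebra.Primes" "HOL-Number_Theory.Cong"
begin

text \<open>A ternary quadratic form
  f = a11 x^2 + a22 y^2 + a33 z^2 + 2 a23 yz + 2 a13 xz + 2 a12 xy,
  given by its six integer coefficients.\<close>

record tern =
  c11 :: int
  c22 :: int
  c33 :: int
  c23 :: int
  c13 :: int
  c12 :: int

definition tmat :: "tern \<Rightarrow> nat \<Rightarrow> nat \<Rightarrow> int" where
  "tmat f i j =
     (if i = 0 \<and> j = 0 then c11 f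
      else if i = 1 \<and> j = 1 then c22 f
      else if i = 2 \<and> j = 2 then c33 f
      else if {i, j} = {1, 2} then c23 f
      else if {i, j} = {0, 2} then c13 f
      else if {i, j} = {0, 1} then c12 f
      else 0)"

definition tval :: "tern \<Rightarrow> real \<Rightarrow> real \<Rightarrow> real \<Rightarrow> real" where
  "tval f (x::real) (y::real) (z::real) = of_int (c11 f) * x^2 + of_int (c22 f) * y^2 + of_int (c33 f) * z^2
      + 2 * of_int (c23 f) * y * z + 2 * of_int (c13 f) * x * z + 2 * of_int (c12 f) * x * y"

definition tern_pos_def :: "tern \<Rightarrow> bool" where
  "tern_pos_def f \<longleftrightarrow> (\<forall>x y z. (x, y, z) \<noteq> (0, 0, 0) \<longrightarrow> tval f x y z > 0)"

definition tau :: "tern \<Rightarrow> int" where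
  "tau f = Gcd {c11 f, c22 f, c33 f, c23 f, c13 f, c12 f}"

definition sigma :: "tern \<Rightarrow> int" where
  "sigma f = Gcd {c11 f, c22 f, c33 f, 2 * c23 f, 2 * c13 f, 2 * c12 f}"

definition primitive :: "tern \<Rightarrow> bool" where
  "primitive f \<longleftrightarrow> tau f = 1"

definition properly_primitive :: "tern \<Rightarrow> bool" where
  "properly_primitive f \<longleftrightarrow> sigma f = 1 \<and> tau f = 1"

definition improperly_primitive :: "tern \<Rightarrow> bool" where
  "improperly_primitive f \<longleftrightarrow> tau f = 1 \<and> sigma f = 2"

definition tdet :: "tern \<Rightarrow> int" where
  "tdet f = c11 f * c22 f * c33 f + 2 * c23 f * c13 f * c12 f
     - c11 f * (c23 f)^2 - c22 f * (c13 f)^2 - c33 f * (c12 f)^2"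

text \<open>Cofactors A_ij of the symmetric matrix A (A_ij = (-1)^(i+j) times the minor).\<close>
definition cof11 :: "tern \<Rightarrow> int" where "cof11 f = c22 f * c33 f - (c23 f)^2"
definition cof22 :: "tern \<Rightarrow> int" where "cof22 f = c11 f * c33 f - (c13 f)^2"
definition cof33 :: "tern \<Rightarrow> int" where "cof33 f = c11 f * c22 f - (c12 f)^2"
definition cof23 :: "tern \<Rightarrow> int" where "cof23 f = c12 f * c13 f - c11 f * c23 f"
definition cof13 :: "tern \<Rightarrow> int" where "cof13 f = c12 f * c23 f - c13 f * c22 f"
definition cof12 :: "tern \<Rightarrow> int" where "cof12 f = c13 f * c23 f - c12 f * c33 f"

definition inv_Omega :: "tern \<Rightarrow> int" where
  "inv_Omega f = Gcd {cof11 f, cof22 f, cof33 f, cof23 f, cof13 f, cof12 f}"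

text \<open>The invariant Delta is given by det A = Delta * Omega^2; stated directly in the theorem.\<close>

definition reciprocal :: "tern \<Rightarrow> tern" where
  "reciprocal f = \<lparr> c11 = cof11 f div inv_Omega f, c22 = cof22 f div inv_Omega f,
     c33 = cof33 f div inv_Omega f, c23 = cof23 f div inv_Omega f,
     c13 = cof13 f div inv_Omega f, c12 = cof12 f div inv_Omega f \<rparr>"

definition tbil :: "tern \<Rightarrow> (nat \<Rightarrow> int) \<Rightarrow> (nat \<Rightarrow> int) \<Rightarrow> int" where
  "tbil f u v = (\<Sum>i<3. \<Sum>j<3. u i * tmat f i j * v j)"

text \<open>f represents the binary form with matrix [[a,t],[t,b]] via the 3x2 integer
  matrix M with columns u and v: M^t A M = B.\<close>
definition represents_by :: "tern \<Rightarrow> (nat \<Rightarrow> int) \<Rightarrow> (nat \<Rightarrow> int) \<Rightarrow> int \<Rightarrow> int \<Rightarrow> int \<Rightarrow> bool" where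
  "represents_by f u v a t b \<longleftrightarrow>
     tbil f u u = a \<and> tbil f u v = t \<and> tbil f v u = t \<and> tbil f v v = b"

definition properly_represents :: "tern \<Rightarrow> int \<Rightarrow> int \<Rightarrow> int \<Rightarrow> bool" where
  "properly_represents f a t b \<longleftrightarrow>
     (\<exists>u v. represents_by f u v a t b \<and>
        Gcd {u 0 * v 1 - u 1 * v 0, u 0 * v 2 - u 2 * v 0, u 1 * v 2 - u 2 * v 1} = 1)"

definition bin_pos_def :: "int \<Rightarrow> int \<Rightarrow> int \<Rightarrow> bool" where
  "bin_pos_def a t b \<longleftrightarrow>
     (\<forall>x y :: real. (x, y) \<noteq> (0, 0) \<longrightarrow> of_int a * x^2 + 2 * of_int t * x * y + of_int b * y^2 > 0)"

end

theory Submission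
  imports Defs
begin

text \<open>The form \<open>f\<close> is built from its reciprocal. A solution \<open>R, S\<close> of the congruences gives
  integers \<open>g\<^sub>2\<^sub>2 = (R\<^sup>2 + \<Delta>a)/C\<close>, \<open>g\<^sub>1\<^sub>2 = (RS - \<Delta>t)/C\<close>, \<open>g\<^sub>1\<^sub>1 = (S\<^sup>2 + \<Delta>b)/C\<close> and a ternary form
  \<open>G\<close> with last row \<open>(S, R, C)\<close> whose cofactors \<open>A\<^sub>1\<^sub>1, A\<^sub>2\<^sub>2, A\<^sub>1\<^sub>2\<close> are \<open>\<Delta>a, \<Delta>b, \<Delta>t\<close>. As \<open>C\<close> is prime
  to \<open>\<Delta>\<close>, every cofactor of \<open>G\<close> is then divisible by \<open>\<Delta>\<close>, and \<open>f = adj G / \<Delta>\<close> has leading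
  binary part \<open>(a, 2t, b)\<close>. Since \<open>adj (adj G) = det G \<cdot> G\<close>, comparing \<open>(3,3)\<close> entries gives
  \<open>det G = \<Delta>\<^sup>2\<Omega>\<close>, hence \<open>adj f = \<Omega> G\<close> and \<open>det f = \<Delta>\<Omega>\<^sup>2\<close>. Parity bookkeeping (\<open>C\<close> twice an odd
  number, \<open>2 \<parallel> t\<close>, \<open>gcd(a, 2t, b) = 4\<close>) shows that \<open>G\<close> is improperly primitive and that the
  \<open>(3,3)\<close> coefficient of \<open>f\<close> is odd, which makes \<open>f\<close> properly primitive with reciprocal \<open>G\<close>;
  positivity is Sylvester's criterion.\<close>

definition tern_smult :: "int \<Rightarrow> tern \<Rightarrow> tern" where
  "tern_smult k f = \<lparr>c11 = k * c11 f, c22 = k * c22 f, c33 = k * c33 f,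
     c23 = k * c23 f, c13 = k * c13 f, c12 = k * c12 f\<rparr>"

definition tern_adj :: "tern \<Rightarrow> tern" where
  "tern_adj f = \<lparr>c11 = cof11 f, c22 = cof22 f, c33 = cof33 f,
     c23 = cof23 f, c13 = cof13 f, c12 = cof12 f\<rparr>"

lemma tern_smult_sel [simp]:
  "c11 (tern_smult k f) = k * c11 f" "c22 (tern_smult k f) = k * c22 f"
  "c33 (tern_smult k f) = k * c33 f" "c23 (tern_smult k f) = k * c23 f"
  "c13 (tern_smult k f) = k * c13 f" "c12 (tern_smult k f) = k * c12 f"
  by (simp_all add: tern_smult_def)

lemma tern_adj_sel [simp]:
  "c11 (tern_adj f) = cof11 f" "c22 (tern_adj f) = cof22 f" "c33 (tern_adj f) = cof33 f"
  "c23 (tern_adj f) = cof23 f" "c13 (tern_adj f) = cof13 f" "c12 (tern_adj f) = cof12 f"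
  by (simp_all add: tern_adj_def)

lemma tern_eqI:
  fixes f g :: tern
  assumes "c11 f = c11 g" "c22 f = c22 g" "c33 f = c33 g"
    and "c23 f = c23 g" "c13 f = c13 g" "c12 f = c12 g"
  shows "f = g"
  using assms by (cases f, cases g) simp

lemma tern_adj_adj: "tern_adj (tern_adj f) = tern_smult (tdet f) f"
  by (rule tern_eqI)
     (simp_all add: tdet_def cof11_def cof22_def cof33_def
        cof23_def cof13_def cof12_def power2_eq_square algebra_simps)

lemma tdet_tern_adj: "tdet (tern_adj f) = (tdet f)\<^sup>2"
  by (simp add: tern_adj_def tdet_def cof11_def cof22_def cof33_def cof23_def cof13_def cof12_def
      power2_eq_square algebra_simps)

lemma tern_adj_smult: "tern_adj (tern_smult k f) = tern_smult (k\<^sup>2) (tern_adj f)"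
  by (rule tern_eqI)
     (simp_all add: cof11_def cof22_def cof33_def
        cof23_def cof13_def cof12_def power2_eq_square algebra_simps)

lemma tdet_tern_smult: "tdet (tern_smult k f) = k ^ 3 * tdet f"
  by (simp add: tern_smult_def tdet_def power2_eq_square power3_eq_cube algebra_simps)

lemma tern_smult_smult: "tern_smult k (tern_smult l f) = tern_smult (k * l) f"
  by (simp add: tern_smult_def)

lemma tern_smult_cancel:
  assumes "tern_smult k f = tern_smult k g" "k \<noteq> 0"
  shows "f = g"
proof (rule tern_eqI)
  have "c11 (tern_smult k f) = c11 (tern_smult k g)" "c22 (tern_smult k f) = c22 (tern_smult k g)"
    "c33 (tern_smult k f) = c33 (tern_smult k g)" "c23 (tern_smult k f) = c23 (tern_smult k g)"
    "c13 (tern_smult k f) = c13 (tern_smult k g)" "c12 (tern_smult k f) = c12 (tern_smult k g)"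
    using assms(1) by simp_all
  then show "c11 f = c11 g" "c22 f = c22 g" "c33 f = c33 g" "c23 f = c23 g" "c13 f = c13 g" "c12 f = c12 g"
    using assms(2) by simp_all
qed

lemma tern_adj_of_scaled_adj:
  assumes adj: "tern_adj G = tern_smult d f" and "d \<noteq> 0" "c33 G \<noteq> 0"
    and cof33: "cof33 f = k * c33 G"
  shows "tern_adj f = tern_smult k G" "tdet f = d * k\<^sup>2"
proof -
  have "tdet G * c33 G = c33 (tern_adj (tern_adj G))"
    by (simp add: tern_adj_adj)
  also have "\<dots> = d\<^sup>2 * k * c33 G"
    by (simp add: adj tern_adj_smult cof33)
  finally have det: "tdet G = d\<^sup>2 * k"
    using \<open>c33 G \<noteq> 0\<close> by simp
  have "tern_smult (d\<^sup>2) (tern_adj f) = tern_adj (tern_adj G)"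
    by (simp add: adj tern_adj_smult)
  also have "\<dots> = tern_smult (d\<^sup>2) (tern_smult k G)"
    by (simp add: tern_adj_adj det tern_smult_smult)
  finally show "tern_adj f = tern_smult k G"
    by (rule tern_smult_cancel) (simp add: \<open>d \<noteq> 0\<close>)
  have "d ^ 3 * tdet f = d ^ 3 * (d * k\<^sup>2)"
    using tdet_tern_adj[of G] by (simp add: adj tdet_tern_smult det algebra_simps power2_eq_square power3_eq_cube)
  then show "tdet f = d * k\<^sup>2"
    using \<open>d \<noteq> 0\<close> by simp
qed

lemma tau_tern_smult: "tau (tern_smult k f) = \<bar>k\<bar> * tau f"
proof -
  have "tau (tern_smult k f) = Gcd ((*) k ` {c11 f, c22 f, c33 f, c23 f, c13 f, c12 f})"
    by (simp add: tau_def)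
  also have "\<dots> = \<bar>k\<bar> * tau f"
    by (simp only: Gcd_mult tau_def) (simp add: abs_mult)
  finally show ?thesis .
qed

lemma inv_Omega_eq:
  assumes "tern_adj f = tern_smult k G" "k \<ge> 0" "primitive G"
  shows "inv_Omega f = k"
proof -
  have "inv_Omega f = tau (tern_adj f)"
    by (simp add: inv_Omega_def tau_def tern_adj_def)
  then show ?thesis
    using assms by (simp add: tau_tern_smult primitive_def)
qed

lemma reciprocal_eq:
  assumes "tern_adj f = tern_smult (inv_Omega f) G" "inv_Omega f \<noteq> 0"
  shows "reciprocal f = G"
proof (rule tern_eqI)
  have "cof11 f = inv_Omega f * c11 G" "cof22 f = inv_Omega f * c22 G" "cof33 f = inv_Omega f * c33 G"
    "cof23 f = inv_Omega f * c23 G" "cof13 f = inv_Omega f * c13 G" "cof12 f = inv_Omega f * c12 G"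
    using arg_cong[OF assms(1), of c11] arg_cong[OF assms(1), of c22] arg_cong[OF assms(1), of c33]
      arg_cong[OF assms(1), of c23] arg_cong[OF assms(1), of c13] arg_cong[OF assms(1), of c12]
    by simp_all
  then show "c11 (reciprocal f) = c11 G" "c22 (reciprocal f) = c22 G" "c33 (reciprocal f) = c33 G"
    "c23 (reciprocal f) = c23 G" "c13 (reciprocal f) = c13 G" "c12 (reciprocal f) = c12 G"
    using assms(2) by (simp_all add: reciprocal_def)
qed

lemma properly_represents_leading_binary: "properly_represents f (c11 f) (c12 f) (c22 f)"
proof -
  define u :: "nat \<Rightarrow> int" where "u i = (if i = 0 then 1 else 0)" for i
  define v :: "nat \<Rightarrow> int" where "v i = (if i = 1 then 1 else 0)" for i
  have "{..<3::nat} = {0, 1, 2}" by auto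
  then have "represents_by f u v (c11 f) (c12 f) (c22 f)"
    by (simp add: represents_by_def tbil_def u_def v_def tmat_def doubleton_eq_iff)
  moreover have "Gcd {u 0 * v 1 - u 1 * v 0, u 0 * v 2 - u 2 * v 0, u 1 * v 2 - u 2 * v 1} = 1"
    by (simp add: u_def v_def)
  ultimately show ?thesis
    unfolding properly_represents_def by blast
qed

lemma tval_completing_squares:
  "of_int (c11 f * cof33 f) * tval f x y z =
     of_int (cof33 f) * (of_int (c11 f) * x + of_int (c12 f) * y + of_int (c13 f) * z)\<^sup>2
     + (of_int (cof33 f) * y - of_int (cof23 f) * z)\<^sup>2 + of_int (c11 f * tdet f) * z\<^sup>2"
  by (simp add: tval_def tdet_def cof33_def cof23_def power2_eq_square algebra_simps)

lemma tern_pos_defI: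
  assumes "c11 f > 0" "cof33 f > 0" "tdet f > 0"
  shows "tern_pos_def f"
  unfolding tern_pos_def_def
proof (intro allI impI)
  fix x y z :: real
  assume nonzero: "(x, y, z) \<noteq> (0, 0, 0)"
  define L where "L = of_int (c11 f) * x + of_int (c12 f) * y + of_int (c13 f) * z"
  define M where "M = of_int (cof33 f) * y - of_int (cof23 f) * z"
  have id: "of_int (c11 f * cof33 f) * tval f x y z
      = of_int (cof33 f) * L\<^sup>2 + M\<^sup>2 + of_int (c11 f * tdet f) * z\<^sup>2"
    unfolding L_def M_def by (rule tval_completing_squares)
  have "of_int (cof33 f) * L\<^sup>2 + M\<^sup>2 + of_int (c11 f * tdet f) * z\<^sup>2 > 0"
  proof (cases "z = 0")
    case z: True
    show ?thesis
    proof (cases "y = 0")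
      case True
      then have "x \<noteq> 0" "L = of_int (c11 f) * x"
        using nonzero z by (auto simp: L_def)
      then have "of_int (cof33 f) * L\<^sup>2 > 0"
        using assms by simp
      then show ?thesis
        by (simp add: z add_pos_nonneg)
    next
      case False
      then have "M \<noteq> 0" using assms(2) by (simp add: M_def z)
      then show ?thesis using assms(2) by (simp add: z add_nonneg_pos)
    qed
  next
    case False
    then show ?thesis
      using assms by (intro add_nonneg_pos add_nonneg_nonneg) simp_all
  qed
  then have "of_int (c11 f * cof33 f) * tval f x y z > 0"
    by (simp only: id)
  then show "tval f x y z > 0"
    by (rule zero_less_mult_pos) (use assms in simp)
qed

lemma bin_pos_def_leading_pos: "bin_pos_def a t b \<Longrightarrow> a > 0"
  unfolding bin_pos_def_def by (drule spec[of _ 1], drule spec[of _ 0]) simp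

lemma Gcd6_eqI:
  fixes k x1 x2 x3 x4 x5 x6 :: int
  assumes "k \<ge> 0" "k dvd x1" "k dvd x2" "k dvd x3" "k dvd x4" "k dvd x5" "k dvd x6"
    and "\<And>d. d dvd x1 \<Longrightarrow> d dvd x2 \<Longrightarrow> d dvd x3 \<Longrightarrow> d dvd x4 \<Longrightarrow> d dvd x5 \<Longrightarrow> d dvd x6
      \<Longrightarrow> d dvd k"
  shows "Gcd {x1, x2, x3, x4, x5, x6} = k"
  using assms by (intro Gcd_eqI) auto

lemma dvd_power2_mult_odd:
  fixes d g :: int
  assumes "d dvd 2 ^ n" "d dvd 2 ^ k * g" "odd g" "k \<le> n"
  shows "d dvd 2 ^ k"
proof -
  have "coprime (2 ^ (n - k)) g"
    using \<open>odd g\<close> by simp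
  then have "gcd (2 ^ k * 2 ^ (n - k)) (2 ^ k * g) = 2 ^ k"
    by (simp add: gcd_mult_left coprime_iff_gcd_eq_1)
  moreover have "(2::int) ^ k * 2 ^ (n - k) = 2 ^ n"
    using \<open>k \<le> n\<close> by (simp flip: power_add)
  ultimately show ?thesis
    using assms(1,2) by (metis gcd_greatest)
qed

lemma four_dvd_double_iff: "(4::int) dvd 2 * x \<longleftrightarrow> 2 dvd x"
  by presburger

lemma even_iff_four_dvd_twice_odd_mult:
  fixes C g \<gamma> :: int
  assumes "C = 2 * \<gamma>" "odd \<gamma>"
  shows "even g \<longleftrightarrow> 4 dvd C * g"
proof -
  have "4 dvd C * g \<longleftrightarrow> 2 dvd \<gamma> * g"
    using assms(1) four_dvd_double_iff by (simp add: mult.assoc)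
  then show ?thesis
    using \<open>odd \<gamma>\<close> by simp
qed

lemma c33_mult_cofactors:
  "c33 G * cof13 G = - (cof12 G * c23 G + cof11 G * c13 G)"
  "c33 G * cof23 G = - (cof12 G * c13 G + cof22 G * c23 G)"
  "c33 G ^ 2 * cof33 G = cof11 G * cof22 G - cof12 G ^ 2
     + c23 G * (cof12 G * c13 G + cof22 G * c23 G) + c13 G * (cof12 G * c23 G + cof11 G * c13 G)"
  by (simp_all add: cof11_def cof22_def cof33_def cof23_def cof13_def cof12_def
      power2_eq_square algebra_simps)

lemma dvd_cofactors_if_coprime_c33:
  fixes d :: int
  assumes "coprime (c33 G) d" "d dvd cof11 G" "d dvd cof22 G" "d dvd cof12 G"
  shows "d dvd cof23 G" "d dvd cof13 G" "d dvd cof33 G"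
proof -
  have cop: "coprime d (c33 G)" "coprime d (c33 G ^ 2)"
    using assms(1) by (simp_all add: coprime_commute)
  have "d dvd c33 G * cof23 G" "d dvd c33 G * cof13 G" "d dvd c33 G ^ 2 * cof33 G"
    unfolding c33_mult_cofactors using assms(2-4)
    by (auto intro!: dvd_add dvd_diff dvd_mult dvd_mult2 simp: power2_eq_square)
  then show "d dvd cof23 G" "d dvd cof13 G" "d dvd cof33 G"
    using cop by (simp_all add: coprime_dvd_mult_right_iff)
qed

lemma exists_tern_adj_eq_smult_of_congruences:
  fixes C Delta R S a t b :: int
  assumes "coprime C Delta"
    and "C dvd R\<^sup>2 + Delta * a" "C dvd R * S - Delta * t" "C dvd S\<^sup>2 + Delta * b"
  obtains G f where "tern_adj G = tern_smult Delta f" "c33 G = C"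
    "c11 f = a" "c22 f = b" "c12 f = t"
proof -
  obtain g22 g12 g11 where
    g: "R\<^sup>2 + Delta * a = C * g22" "R * S - Delta * t = C * g12" "S\<^sup>2 + Delta * b = C * g11"
    using assms(2-4) by (metis dvdE)
  define G where "G = \<lparr>c11 = g11, c22 = g22, c33 = C, c23 = R, c13 = S, c12 = g12\<rparr>"
  have cof: "cof11 G = Delta * a" "cof22 G = Delta * b" "cof12 G = Delta * t"
    using g by (simp_all add: G_def cof11_def cof22_def cof12_def algebra_simps power2_eq_square)
  have "coprime (c33 G) Delta"
    using assms(1) by (simp add: G_def)
  then have dvd: "Delta dvd cof23 G" "Delta dvd cof13 G" "Delta dvd cof33 G"
    using dvd_cofactors_if_coprime_c33 cof by simp_all
  define f where "f = \<lparr>c11 = a, c22 = b, c33 = cof33 G div Delta,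
    c23 = cof23 G div Delta, c13 = cof13 G div Delta, c12 = t\<rparr>"
  have "tern_adj G = tern_smult Delta f"
    unfolding f_def using dvd by (intro tern_eqI) (simp_all add: cof)
  moreover have "c33 G = C" "c11 f = a" "c22 f = b" "c12 f = t"
    by (simp_all add: G_def f_def)
  ultimately show thesis
    using that by blast
qed

lemma tern_adj_eq_smult_cofactors:
  assumes "tern_adj G = tern_smult d f"
  shows "c33 G * c22 G = (c23 G)\<^sup>2 + d * c11 f"
    "c33 G * c11 G = (c13 G)\<^sup>2 + d * c22 f"
    "c33 G * c12 G = c13 G * c23 G - d * c12 f"
    "d * c33 f = c11 G * c22 G - (c12 G)\<^sup>2"
proof -
  have "cof11 G = d * c11 f" "cof22 G = d * c22 f" "cof12 G = d * c12 f" "cof33 G = d * c33 f"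
    using arg_cong[OF assms, of c11] arg_cong[OF assms, of c22] arg_cong[OF assms, of c12]
      arg_cong[OF assms, of c33]
    by simp_all
  then show "c33 G * c22 G = (c23 G)\<^sup>2 + d * c11 f"
    "c33 G * c11 G = (c13 G)\<^sup>2 + d * c22 f"
    "c33 G * c12 G = c13 G * c23 G - d * c12 f"
    "d * c33 f = c11 G * c22 G - (c12 G)\<^sup>2"
    by (simp_all add: cof11_def cof22_def cof12_def cof33_def algebra_simps)
qed

lemma tern_adj_eq_smult_parity:
  fixes Delta \<gamma> :: int
  assumes adj: "tern_adj G = tern_smult Delta f"
    and C: "c33 G = 2 * \<gamma>" "odd \<gamma>" and "odd Delta"
    and "4 dvd c11 f" "4 dvd c22 f" "2 dvd c12 f" "\<not> 4 dvd c12 f"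
  shows "even (c11 G)" "even (c22 G)" "odd (c12 G)" "odd (c33 f)"
proof -
  note eq = tern_adj_eq_smult_cofactors[OF adj]
  have sq: "(c23 G)\<^sup>2 = c33 G * c22 G - Delta * c11 f" "(c13 G)\<^sup>2 = c33 G * c11 G - Delta * c22 f"
    using eq(1,2) by simp_all
  have "even (c11 f)" "even (c22 f)"
    using \<open>4 dvd c11 f\<close> \<open>4 dvd c22 f\<close> by (auto elim!: dvdE)
  then have "even ((c23 G)\<^sup>2)" "even ((c13 G)\<^sup>2)"
    unfolding sq using C(1) by simp_all
  then have "even (c23 G)" "even (c13 G)"
    by simp_all
  then have sq4: "4 dvd (c23 G)\<^sup>2" "4 dvd (c13 G)\<^sup>2" "4 dvd c13 G * c23 G"
    by (auto simp: power2_eq_square elim!: evenE)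
  have "4 dvd c33 G * c22 G" "4 dvd c33 G * c11 G"
    unfolding eq(1,2) using sq4 \<open>4 dvd c11 f\<close> \<open>4 dvd c22 f\<close> by simp_all
  then show "even (c11 G)" "even (c22 G)"
    using even_iff_four_dvd_twice_odd_mult[OF C] by simp_all
  obtain t' where t': "c12 f = 2 * t'"
    using \<open>2 dvd c12 f\<close> by (rule dvdE)
  then have "odd (Delta * t')"
    using \<open>\<not> 4 dvd c12 f\<close> \<open>odd Delta\<close> by (simp add: four_dvd_double_iff)
  then have "\<not> 4 dvd Delta * c12 f"
    by (simp add: t' mult.left_commute[of Delta] four_dvd_double_iff)
  then have "\<not> 4 dvd c33 G * c12 G"
    unfolding eq(3) using sq4(3) by (simp add: dvd_diff_right_iff)
  then show "odd (c12 G)"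
    using even_iff_four_dvd_twice_odd_mult[OF C] by simp
  then have "odd (Delta * c33 f)"
    unfolding eq(4) using \<open>even (c11 G)\<close> by simp
  then show "odd (c33 f)"
    by simp
qed

lemma properly_primitive_if_odd_c33:
  assumes "odd (c33 f)" "gcd (c11 f) (gcd (2 * c12 f) (c22 f)) = 4"
  shows "properly_primitive f"
proof -
  have unit: "d dvd 1" if "d dvd c11 f" "d dvd c22 f" "d dvd c33 f" "d dvd 2 * c12 f" for d
  proof -
    have "d dvd gcd (c11 f) (gcd (2 * c12 f) (c22 f))"
      using that by (intro gcd_greatest)
    then have "d dvd 2 ^ 2"
      using assms(2) by simp
    then show ?thesis
      using dvd_power2_mult_odd[of d 2 0 "c33 f"] that(3) assms(1) by simp
  qed
  have "sigma f = 1"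
    unfolding sigma_def using unit by (intro Gcd6_eqI) auto
  moreover have "tau f = 1"
    unfolding tau_def using unit by (intro Gcd6_eqI) auto
  ultimately show ?thesis
    by (simp add: properly_primitive_def)
qed

lemma improperly_primitive_if_tern_adj_eq_smult:
  fixes Delta :: int
  assumes adj: "tern_adj G = tern_smult Delta f" and cop: "coprime (c33 G) Delta"
    and gcd4: "gcd (c11 f) (gcd (2 * c12 f) (c22 f)) = 4"
    and even: "even (c11 G)" "even (c22 G)" "even (c33 G)" and odd: "odd (c12 G)"
  shows "improperly_primitive G"
proof -
  note eq = tern_adj_eq_smult_cofactors[OF adj]
  have dvd2: "d dvd 2" if d: "d dvd c11 G" "d dvd c22 G" "d dvd c33 G"
    "d dvd 2 * c23 G" "d dvd 2 * c13 G" "d dvd 2 * c12 G" for d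
  proof -
    have coprime: "coprime d Delta"
      using cop d(3) by (meson coprime_divisors dvd_refl)
    have lin: "Delta * (2 * c11 f) = c22 G * (2 * c33 G) - (2 * c23 G) * c23 G"
      "Delta * (2 * c22 f) = c11 G * (2 * c33 G) - (2 * c13 G) * c13 G"
      "Delta * (2 * (2 * c12 f)) = 2 * ((2 * c13 G) * c23 G) - (2 * c12 G) * (2 * c33 G)"
      using eq(1-3) by (simp_all add: algebra_simps power2_eq_square)
    have "d dvd Delta * (2 * c11 f)" "d dvd Delta * (2 * c22 f)" "d dvd Delta * (2 * (2 * c12 f))"
      unfolding lin using d by (meson dvd_diff dvd_mult dvd_mult2)+
    then have "d dvd 2 * c11 f" "d dvd 2 * c22 f" "d dvd 2 * (2 * c12 f)"
      using coprime by (simp_all add: coprime_dvd_mult_right_iff)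
    then have "d dvd gcd (2 * c11 f) (gcd (2 * (2 * c12 f)) (2 * c22 f))"
      by (intro gcd_greatest)
    also have "\<dots> = 2 * gcd (c11 f) (gcd (2 * c12 f) (c22 f))"
      using gcd_mult_left[of 2 "2 * c12 f" "c22 f"]
        gcd_mult_left[of 2 "c11 f" "gcd (2 * c12 f) (c22 f)"] by simp
    finally have "d dvd 2 ^ 3"
      using gcd4 by simp
    then show ?thesis
      using dvd_power2_mult_odd[of d 3 1 "c12 G"] d(6) odd by simp
  qed
  have "sigma G = 2"
    unfolding sigma_def using dvd2 even by (intro Gcd6_eqI) auto
  moreover have "tau G = 1"
    unfolding tau_def
  proof (intro Gcd6_eqI)
    fix d :: int
    assume "d dvd c11 G" "d dvd c22 G" "d dvd c33 G" "d dvd c23 G" "d dvd c13 G" "d dvd c12 G"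
    then show "d dvd 1"
      using dvd2 dvd_power2_mult_odd[of d 1 0 "c12 G"] odd by simp
  qed auto
  ultimately show ?thesis
    by (simp add: improperly_primitive_def)
qed

theorem mainTheorem2:
  fixes a t b Omega C Delta :: int
  assumes rho_pd: "bin_pos_def a t b"
    and disc: "(2 * t)^2 - 4 * a * b = - 4 * Omega * C"
    and disc_neg: "- 4 * Omega * C < 0"
    and t_exact: "2 dvd t" "\<not> 4 dvd t"
    and gcd4: "gcd a (gcd (2 * t) b) = 4"
    and C_form: "C = 2 \<or> (\<exists>p::int. prime p \<and> odd p \<and> C = 2 * p)"
    and Omega_pos: "Omega > 0" and Omega_even: "even Omega"
    and Delta_pos: "Delta > 0" and Delta_odd: "odd Delta"
    and coprime_C_Delta: "gcd C Delta = 1"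
    and solvable: "\<exists>R S :: int. [R^2 + Delta * a = 0] (mod C) \<and>
                      [R * S - Delta * t = 0] (mod C) \<and>
                      [S^2 + Delta * b = 0] (mod C)"
  shows "\<exists>f. tern_pos_def f \<and> properly_primitive f \<and>
             inv_Omega f = Omega \<and> tdet f = Delta * Omega^2 \<and>
             properly_represents f a t b \<and>
             improperly_primitive (reciprocal f)"
proof -
  have coprime: "coprime C Delta"
    using coprime_C_Delta by (simp add: coprime_iff_gcd_eq_1)
  obtain R S where "C dvd R\<^sup>2 + Delta * a" "C dvd R * S - Delta * t" "C dvd S\<^sup>2 + Delta * b"
    using solvable by (auto simp: cong_0_iff)
  with coprime obtain G f where adj: "tern_adj G = tern_smult Delta f" and "c33 G = C"
    and f: "c11 f = a" "c22 f = b" "c12 f = t"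
    by (rule exists_tern_adj_eq_smult_of_congruences)
  have "C > 0"
    using disc_neg Omega_pos by (simp add: zero_less_mult_iff)
  have cof33: "cof33 f = Omega * c33 G"
    using disc f \<open>c33 G = C\<close> by (simp add: cof33_def algebra_simps power2_eq_square)
  then have adj_f: "tern_adj f = tern_smult Omega G" and det: "tdet f = Delta * Omega\<^sup>2"
    using tern_adj_of_scaled_adj[OF adj] Delta_pos \<open>C > 0\<close> \<open>c33 G = C\<close> by simp_all
  obtain \<gamma> where \<gamma>: "c33 G = 2 * \<gamma>" "odd \<gamma>"
    using C_form \<open>c33 G = C\<close> by auto
  have gcd4_f: "gcd (c11 f) (gcd (2 * c12 f) (c22 f)) = 4"
    using gcd4 f by simp
  then have "4 dvd c11 f" "4 dvd c22 f"
    by (metis gcd_dvd1 gcd_dvd2 dvd_trans)+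
  then have parity: "even (c11 G)" "even (c22 G)" "odd (c12 G)" "odd (c33 f)"
    using tern_adj_eq_smult_parity[OF adj \<gamma> Delta_odd] t_exact f by simp_all
  have G: "improperly_primitive G"
    using improperly_primitive_if_tern_adj_eq_smult[OF adj _ gcd4_f] coprime parity \<gamma>
      \<open>c33 G = C\<close> by simp
  then have Omega: "inv_Omega f = Omega"
    using inv_Omega_eq[OF adj_f] Omega_pos by (simp add: improperly_primitive_def primitive_def)
  have "tern_pos_def f"
    using bin_pos_def_leading_pos[OF rho_pd] cof33 det \<open>c33 G = C\<close> \<open>C > 0\<close> Omega_pos Delta_pos f
    by (intro tern_pos_defI) simp_all
  moreover have "reciprocal f = G"
    using reciprocal_eq adj_f Omega Omega_pos by simp
  moreover have "properly_represents f a t b"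
    using properly_represents_leading_binary[of f] f by simp
  ultimately show ?thesis
    using properly_primitive_if_odd_c33[OF parity(4) gcd4_f] Omega det G by blast
qed

end
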